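(* For every $n\ge1$, the half space $\mathbb R^n_+=\{(x_1,\dots,x_n)\in\mathbb R^n: x_n\ge0\}$ with the Euclidean metric is an absolute extensor in the category $\mathcal A$ and in the category $\tilde{\mathcal A}$.
   Context: A metric space is proper if all closed balls are compact; a map is proper if preimages of compact sets are compact; a map $f:X\to Y$ of metric spaces is asymptotically Lipschitz if there are $\lambda,s\ge0$ with $d_Y(f(x),f(x'))\le\lambda d_X(x,x')+s$ for all $x,x'$. The category $\mathcal A$ has proper metric spaces as objects and continuous proper asymptotically Lipschitz maps as morphisms. The category $\tilde{\mathcal A}$ has the same objects; its morphisms are morphisms $f:X\to Y$ of $\mathcal A$ with nonzero norm, meaning: for base points $x_0\in X$, $y_0\in Y$ there exist $c>0$, $b\ge0$ with $d_Y(f(x),y_0)\ge c\,d_X(x,x_0)-b$ for all $x\in X$ (independent of base points). An object $Y$ is an absolute extensor in such a category if for every object $X$, every closed subset $A\subset X$ with the induced metric, and every morphism $\phi:A\to Y$, there is a morphism $\bar\phi:X\to Y$ with $\bar\phi|_A=\phi$. *)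

theory Defs
  imports "HOL-Analysis.Analysis"
begin

definition proper_metric :: "'a metric \<Rightarrow> bool" where
  "proper_metric X \<longleftrightarrow>
     (\<forall>x\<in>mspace X. \<forall>r. compactin (mtopology_of X) (mcball_of X x r))"

definition proper_mmap :: "'a metric \<Rightarrow> 'b metric \<Rightarrow> ('a \<Rightarrow> 'b) \<Rightarrow> bool" where
  "proper_mmap X Y f \<longleftrightarrow>
     (\<forall>K. compactin (mtopology_of Y) K \<longrightarrow>
          compactin (mtopology_of X) {x \<in> mspace X. f x \<in> K})"

definition asymp_lipschitz :: "'a metric \<Rightarrow> 'b metric \<Rightarrow> ('a \<Rightarrow> 'b) \<Rightarrow> bool" where
  "asymp_lipschitz X Y f \<longleftrightarrow>
     (\<exists>L s. L \<ge> 0 \<and> s \<ge> 0 \<and>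
        (\<forall>x\<in>mspace X. \<forall>x'\<in>mspace X. mdist Y (f x) (f x') \<le> L * mdist X x x' + s))"

definition morphism_A :: "'a metric \<Rightarrow> 'b metric \<Rightarrow> ('a \<Rightarrow> 'b) \<Rightarrow> bool" where
  "morphism_A X Y f \<longleftrightarrow>
     continuous_map (mtopology_of X) (mtopology_of Y) f \<and>
     proper_mmap X Y f \<and> asymp_lipschitz X Y f"

text \<open>Nonzero norm (stated for all base points; the paper notes independence of base points).\<close>
definition nonzero_norm :: "'a metric \<Rightarrow> 'b metric \<Rightarrow> ('a \<Rightarrow> 'b) \<Rightarrow> bool" where
  "nonzero_norm X Y f \<longleftrightarrow>
     (\<forall>x0\<in>mspace X. \<forall>y0\<in>mspace Y. \<exists>c b. c > 0 \<and> b \<ge> 0 \<and>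
        (\<forall>x\<in>mspace X. mdist Y (f x) y0 \<ge> c * mdist X x x0 - b))"

definition morphism_At :: "'a metric \<Rightarrow> 'b metric \<Rightarrow> ('a \<Rightarrow> 'b) \<Rightarrow> bool" where
  "morphism_At X Y f \<longleftrightarrow> morphism_A X Y f \<and> nonzero_norm X Y f"

text \<open>Extension property of the target Y with respect to one object X (the absolute
  extensor property is this for every object X of every type).\<close>
definition extends_A :: "'a metric \<Rightarrow> 'b metric \<Rightarrow> bool" where
  "extends_A X Y \<longleftrightarrow>
     (\<forall>A \<phi>. closedin (mtopology_of X) A \<longrightarrow> morphism_A (submetric X A) Y \<phi> \<longrightarrow>
        (\<exists>\<psi>. morphism_A X Y \<psi> \<and> (\<forall>a\<in>A. \<psi> a = \<phi> a)))"

definition extends_At :: "'a metric \<Rightarrow> 'b metric \<Rightarrow> bool" where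
  "extends_At X Y \<longleftrightarrow>
     (\<forall>A \<phi>. closedin (mtopology_of X) A \<longrightarrow> morphism_At (submetric X A) Y \<phi> \<longrightarrow>
        (\<exists>\<psi>. morphism_At X Y \<psi> \<and> (\<forall>a\<in>A. \<psi> a = \<phi> a)))"

definition half_space_metric :: "'n::finite \<Rightarrow> (real^'n) metric" where
  "half_space_metric k = submetric euclidean_metric {x. x $ k \<ge> 0}"

end

theory Submission
  imports Defs
begin

text \<open>Each coordinate of \<phi> extends with the same asymptotic Lipschitz constants: the McShane
  inf-convolution gives an L-Lipschitz function that lies within s below the coordinate on A,
  and Tietze's theorem extends the continuous defect with values in [0, s]. To land in the half
  space, the k-th coordinate is replaced by max 0 E_k + d(x, A). This distance term makes
  the extension \<psi> coercive relative to A: every x lies within |\<psi> x| + 1 of a point a of A,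
  where |\<phi> a| is then bounded by the Lipschitz estimate. Hence \<psi>-preimages of bounded sets
  are bounded (so \<psi> is proper, X being proper), and a linear lower bound for \<phi> on A
  propagates to \<psi>. An empty A is handled by extending the zero map from a single point.\<close>

section \<open>McShane extension and distance to a set\<close>

definition mcshane_extension :: "'a metric \<Rightarrow> 'a set \<Rightarrow> ('a \<Rightarrow> real) \<Rightarrow> real \<Rightarrow> 'a \<Rightarrow> real" where
  "mcshane_extension X A f L x = (INF a\<in>A. f a + L * mdist X x a)"

lemma mcshane_extension_greatest:
  assumes "A \<noteq> {}" "\<And>a. a \<in> A \<Longrightarrow> c \<le> f a + L * mdist X x a"
  shows "c \<le> mcshane_extension X A f L x"
  unfolding mcshane_extension_def using assms by (intro cINF_greatest) auto

context
  fixes X :: "'a metric" and A :: "'a set" and f :: "'a \<Rightarrow> real" and L s :: real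
  assumes A_sub: "A \<subseteq> mspace X" and A_ne: "A \<noteq> {}" and L_nonneg: "0 \<le> L"
    and f_bound: "\<And>a a'. a \<in> A \<Longrightarrow> a' \<in> A \<Longrightarrow> f a - f a' \<le> L * mdist X a a' + s"
begin

lemma mcshane_extension_le:
  assumes x: "x \<in> mspace X" and a: "a \<in> A"
  shows "mcshane_extension X A f L x \<le> f a + L * mdist X x a"
proof -
  obtain a0 where a0: "a0 \<in> A" using A_ne by blast
  have "f a0 - s - L * mdist X a0 x \<le> f a' + L * mdist X x a'" if a': "a' \<in> A" for a'
  proof -
    have "mdist X a0 a' \<le> mdist X a0 x + mdist X x a'"
      using a0 a' x A_sub by (intro mdist_triangle) auto
    then have "L * mdist X a0 a' \<le> L * mdist X a0 x + L * mdist X x a'"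
      using L_nonneg by (metis distrib_left mult_left_mono)
    then show ?thesis using f_bound[OF a0 a'] by linarith
  qed
  then have "bdd_below ((\<lambda>a. f a + L * mdist X x a) ` A)" by (rule bdd_belowI2)
  then show ?thesis unfolding mcshane_extension_def using a by (rule cINF_lower)
qed

lemma mcshane_extension_lipschitz:
  assumes x: "x \<in> mspace X" and y: "y \<in> mspace X"
  shows "\<bar>mcshane_extension X A f L x - mcshane_extension X A f L y\<bar> \<le> L * mdist X x y"
proof -
  have one_side: "mcshane_extension X A f L x \<le> mcshane_extension X A f L y + L * mdist X x y"
    if x: "x \<in> mspace X" and y: "y \<in> mspace X" for x y
  proof -
    have "mcshane_extension X A f L x - L * mdist X x y \<le> mcshane_extension X A f L y"
    proof (rule mcshane_extension_greatest[OF A_ne])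
      fix a assume a: "a \<in> A"
      have "mdist X x a \<le> mdist X x y + mdist X y a"
        using a x y A_sub by (intro mdist_triangle) auto
      then have "L * mdist X x a \<le> L * mdist X x y + L * mdist X y a"
        using L_nonneg by (metis distrib_left mult_left_mono)
      then show "mcshane_extension X A f L x - L * mdist X x y \<le> f a + L * mdist X y a"
        using mcshane_extension_le[OF x a] by linarith
    qed
    then show ?thesis by linarith
  qed
  show ?thesis
    using one_side[OF x y] one_side[OF y x] by (simp add: mdist_commute abs_le_iff)
qed

lemma mcshane_extension_on_set:
  assumes a: "a \<in> A"
  shows "f a - s \<le> mcshane_extension X A f L a" and "mcshane_extension X A f L a \<le> f a"
proof -
  show "f a - s \<le> mcshane_extension X A f L a"
    using f_bound[OF a] a A_sub by (intro mcshane_extension_greatest[OF A_ne]) (smt (verit))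
  have a_in: "a \<in> mspace X" using a A_sub by blast
  show "mcshane_extension X A f L a \<le> f a"
    using mcshane_extension_le[OF a_in a] mdist_zero[OF a_in a_in] by simp
qed

end

definition mdist_set :: "'a metric \<Rightarrow> 'a set \<Rightarrow> 'a \<Rightarrow> real" where
  "mdist_set X A x = (INF a\<in>A. mdist X x a)"

lemma mdist_set_eq_mcshane_extension: "mdist_set X A = mcshane_extension X A (\<lambda>_. 0) 1"
  by (simp add: fun_eq_iff mdist_set_def mcshane_extension_def)

lemma mdist_set_nonneg: "A \<noteq> {} \<Longrightarrow> 0 \<le> mdist_set X A x"
  unfolding mdist_set_eq_mcshane_extension by (rule mcshane_extension_greatest) simp_all

lemma mdist_set_approx:
  assumes "A \<noteq> {}" "0 < e"
  obtains a where "a \<in> A" "mdist X x a < mdist_set X A x + e"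
proof -
  have "Inf ((\<lambda>a. mdist X x a) ` A) < mdist_set X A x + e"
    using assms(2) by (simp add: mdist_set_def)
  then show ?thesis
    using cInf_lessD[of "(\<lambda>a. mdist X x a) ` A"] assms(1) that by blast
qed

context
  fixes X :: "'a metric" and A :: "'a set"
  assumes A_sub: "A \<subseteq> mspace X" and A_ne: "A \<noteq> {}"
begin

lemma mdist_set_eq_0: "a \<in> A \<Longrightarrow> mdist_set X A a = 0"
  using mcshane_extension_on_set[OF A_sub A_ne zero_le_one, of "\<lambda>_. 0" 0 a]
  by (simp add: mdist_set_eq_mcshane_extension)

lemma mdist_set_lipschitz:
  "x \<in> mspace X \<Longrightarrow> y \<in> mspace X \<Longrightarrow> \<bar>mdist_set X A x - mdist_set X A y\<bar> \<le> mdist X x y"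
  using mcshane_extension_lipschitz[OF A_sub A_ne zero_le_one, of "\<lambda>_. 0" 0 x y]
  by (simp add: mdist_set_eq_mcshane_extension)

end

section \<open>Extension into the half space\<close>

lemma lipschitz_imp_continuous_map_real:
  assumes "\<And>x y. x \<in> mspace X \<Longrightarrow> y \<in> mspace X \<Longrightarrow> \<bar>F x - F y\<bar> \<le> B * mdist X x y"
  shows "continuous_map (mtopology_of X) euclideanreal F"
proof -
  have "Lipschitz_continuous_map X euclidean_metric F"
    unfolding Lipschitz_continuous_map_def using assms by (auto simp: dist_real_def)
  then show ?thesis using Lipschitz_continuous_imp_continuous_map by fastforce
qed

lemma asymp_lipschitz_real_extension:
  assumes A: "closedin (mtopology_of X) A" "A \<noteq> {}"
    and f_cont: "continuous_map (subtopology (mtopology_of X) A) euclideanreal f"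
    and L: "0 \<le> L" and s: "0 \<le> s"
    and f_bound: "\<And>a a'. a \<in> A \<Longrightarrow> a' \<in> A \<Longrightarrow> \<bar>f a - f a'\<bar> \<le> L * mdist X a a' + s"
  obtains E where "continuous_map (mtopology_of X) euclideanreal E" "\<And>a. a \<in> A \<Longrightarrow> E a = f a"
    "\<And>x y. x \<in> mspace X \<Longrightarrow> y \<in> mspace X \<Longrightarrow> \<bar>E x - E y\<bar> \<le> L * mdist X x y + s"
proof -
  have A_sub: "A \<subseteq> mspace X" using closedin_subset[OF A(1)] by simp
  have f_bound': "f a - f a' \<le> L * mdist X a a' + s" if "a \<in> A" "a' \<in> A" for a a'
    using f_bound[OF that] by linarith
  define F where "F = mcshane_extension X A f L"
  have F_lip: "\<bar>F x - F y\<bar> \<le> L * mdist X x y" if "x \<in> mspace X" "y \<in> mspace X" for x y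
    unfolding F_def using mcshane_extension_lipschitz[OF A_sub A(2) L f_bound' that] .
  have F_cont: "continuous_map (mtopology_of X) euclideanreal F"
    using F_lip by (rule lipschitz_imp_continuous_map_real)
  have defect_cont: "continuous_map (subtopology (mtopology_of X) A) euclideanreal (\<lambda>x. f x - F x)"
    by (intro continuous_map_diff f_cont continuous_map_from_subtopology F_cont)
  have defect_range: "(\<lambda>x. f x - F x) ` A \<subseteq> {0..s}"
    using mcshane_extension_on_set[OF A_sub A(2) L f_bound'] by (force simp: F_def)
  have "normal_space (mtopology_of X)"
    by (simp add: Metric_space.normal_space_mtopology mtopology_of_def)
  then obtain G where G: "continuous_map (mtopology_of X) euclideanreal G"
      "\<And>x. x \<in> A \<Longrightarrow> G x = f x - F x" "G ` topspace (mtopology_of X) \<subseteq> {0..s}"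
    using Tietze_extension_closed_real_interval[OF _ A(1) defect_cont defect_range s] by blast
  show ?thesis
  proof
    show "continuous_map (mtopology_of X) euclideanreal (\<lambda>x. F x + G x)"
      by (intro continuous_map_add F_cont G(1))
    show "F a + G a = f a" if "a \<in> A" for a
      using G(2)[OF that] by simp
    show "\<bar>F x + G x - (F y + G y)\<bar> \<le> L * mdist X x y + s"
      if "x \<in> mspace X" "y \<in> mspace X" for x y
    proof -
      have "G x \<in> {0..s}" "G y \<in> {0..s}" using G(3) that by auto
      then show ?thesis using F_lip[OF that] by (auto simp: abs_le_iff)
    qed
  qed
qed

lemma continuous_map_vec_nth:
  "continuous_map X euclidean f \<Longrightarrow> continuous_map X euclideanreal (\<lambda>x. f x $ i)"
  by (simp add: continuous_map_atin tendsto_vec_nth)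

lemma continuous_map_vec_lambda:
  "(\<And>i. continuous_map X euclideanreal (g i)) \<Longrightarrow> continuous_map X euclidean (\<lambda>x. \<chi> i. g i x)"
  by (simp add: continuous_map_atin tendsto_vec_lambda)

lemma asymp_lipschitz_cart_extension:
  fixes f :: "'a \<Rightarrow> real^'n"
  assumes A: "closedin (mtopology_of X) A" "A \<noteq> {}"
    and f_cont: "continuous_map (subtopology (mtopology_of X) A) euclidean f"
    and L: "0 \<le> L" and s: "0 \<le> s"
    and f_bound: "\<And>a a'. a \<in> A \<Longrightarrow> a' \<in> A \<Longrightarrow> dist (f a) (f a') \<le> L * mdist X a a' + s"
  obtains E where "continuous_map (mtopology_of X) euclidean E" "\<And>a. a \<in> A \<Longrightarrow> E a = f a"
    "\<And>i x y. x \<in> mspace X \<Longrightarrow> y \<in> mspace X \<Longrightarrow> \<bar>E x $ i - E y $ i\<bar> \<le> L * mdist X x y + s"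
proof -
  have "\<exists>G. continuous_map (mtopology_of X) euclideanreal G \<and> (\<forall>a\<in>A. G a = f a $ i) \<and>
      (\<forall>x\<in>mspace X. \<forall>y\<in>mspace X. \<bar>G x - G y\<bar> \<le> L * mdist X x y + s)" for i
  proof -
    have "\<bar>f a $ i - f a' $ i\<bar> \<le> L * mdist X a a' + s" if "a \<in> A" "a' \<in> A" for a a'
      using component_le_norm_cart[of "f a - f a'" i] f_bound[OF that] by (simp add: dist_norm)
    then show ?thesis
      using asymp_lipschitz_real_extension[OF A continuous_map_vec_nth[OF f_cont] L s] by metis
  qed
  then obtain G where G: "\<And>i. continuous_map (mtopology_of X) euclideanreal (G i)"
      "\<And>i a. a \<in> A \<Longrightarrow> G i a = f a $ i"
      "\<And>i x y. x \<in> mspace X \<Longrightarrow> y \<in> mspace X \<Longrightarrow> \<bar>G i x - G i y\<bar> \<le> L * mdist X x y + s"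
    by metis
  show ?thesis
  proof
    show "continuous_map (mtopology_of X) euclidean (\<lambda>x. \<chi> i. G i x)"
      using G(1) by (rule continuous_map_vec_lambda)
  qed (simp_all add: vec_eq_iff G(2,3))
qed

lemma dist_cart_le_card_mult:
  fixes x y :: "real^'n"
  assumes "\<And>i. \<bar>x $ i - y $ i\<bar> \<le> c"
  shows "dist x y \<le> real CARD('n) * c"
proof -
  have "dist x y \<le> (\<Sum>i\<in>UNIV. \<bar>(x - y) $ i\<bar>)"
    using norm_le_l1_cart[of "x - y"] by (simp add: dist_norm)
  also have "\<dots> \<le> (\<Sum>i\<in>(UNIV::'n set). c)"
    using assms by (intro sum_mono) simp
  finally show ?thesis by simp
qed

definition raise_component :: "'n \<Rightarrow> real \<Rightarrow> real^'n \<Rightarrow> real^'n" where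
  "raise_component k d v = (\<chi> i. if i = k then max 0 (v $ k) + d else v $ i)"

lemma raise_component_nth:
  "raise_component k d v $ i = (if i = k then max 0 (v $ k) + d else v $ i)"
  by (simp add: raise_component_def)

lemma raise_component_ge: "d \<le> raise_component k d v $ k"
  by (simp add: raise_component_nth)

lemma raise_component_0: "0 \<le> v $ k \<Longrightarrow> raise_component k 0 v = v"
  by (simp add: vec_eq_iff raise_component_nth)

lemma raise_component_diff_le:
  "\<bar>raise_component k d v $ i - raise_component k d' w $ i\<bar> \<le> \<bar>v $ i - w $ i\<bar> + \<bar>d - d'\<bar>"
  by (simp add: raise_component_nth) linarith

lemma continuous_map_raise_component:
  assumes "continuous_map T euclideanreal D" "continuous_map T euclidean E"
  shows "continuous_map T euclidean (\<lambda>x. raise_component k (D x) (E x))"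
  unfolding raise_component_def
proof (rule continuous_map_vec_lambda)
  fix i
  show "continuous_map T euclideanreal
      (\<lambda>x. if i = k then max 0 (E x $ k) + D x else E x $ i)"
    using assms by (cases "i = k")
      (simp_all add: continuous_map_vec_nth continuous_map_add continuous_map_real_max)
qed

lemma half_space_lift:
  fixes \<phi> :: "'a \<Rightarrow> real^'n" and k :: 'n
  assumes A: "closedin (mtopology_of X) A" "A \<noteq> {}"
    and \<phi>_cont: "continuous_map (subtopology (mtopology_of X) A) euclidean \<phi>"
    and \<phi>_half: "\<And>a. a \<in> A \<Longrightarrow> 0 \<le> \<phi> a $ k"
    and L: "0 \<le> L" and s: "0 \<le> s"
    and \<phi>_bound: "\<And>a a'. a \<in> A \<Longrightarrow> a' \<in> A \<Longrightarrow> dist (\<phi> a) (\<phi> a') \<le> L * mdist X a a' + s"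
  obtains \<psi> \<Lambda> \<sigma> where "continuous_map (mtopology_of X) euclidean \<psi>"
    "\<And>a. a \<in> A \<Longrightarrow> \<psi> a = \<phi> a"
    "\<And>x. x \<in> mspace X \<Longrightarrow> 0 \<le> \<psi> x $ k"
    "\<And>x. x \<in> mspace X \<Longrightarrow> \<exists>a\<in>A. mdist X x a \<le> norm (\<psi> x) + 1"
    "0 \<le> \<Lambda>" "0 \<le> \<sigma>"
    "\<And>x y. x \<in> mspace X \<Longrightarrow> y \<in> mspace X \<Longrightarrow> dist (\<psi> x) (\<psi> y) \<le> \<Lambda> * mdist X x y + \<sigma>"
proof -
  have A_sub: "A \<subseteq> mspace X" using closedin_subset[OF A(1)] by simp
  obtain E where E_cont: "continuous_map (mtopology_of X) euclidean E"
    and E_on_A: "\<And>a. a \<in> A \<Longrightarrow> E a = \<phi> a"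
    and E_bound: "\<And>i x y. x \<in> mspace X \<Longrightarrow> y \<in> mspace X \<Longrightarrow> \<bar>E x $ i - E y $ i\<bar> \<le> L * mdist X x y + s"
    using asymp_lipschitz_cart_extension[OF A \<phi>_cont L s \<phi>_bound] by blast
  define D where "D = mdist_set X A"
  have D_lip: "\<bar>D x - D y\<bar> \<le> mdist X x y" if "x \<in> mspace X" "y \<in> mspace X" for x y
    unfolding D_def using mdist_set_lipschitz[OF A_sub A(2) that] .
  have D_cont: "continuous_map (mtopology_of X) euclideanreal D"
    by (rule lipschitz_imp_continuous_map_real[where B = 1]) (simp add: D_lip)
  define \<psi> where "\<psi> x = raise_component k (D x) (E x)" for x
  have D_le: "D x \<le> \<psi> x $ k" for x
    unfolding \<psi>_def by (rule raise_component_ge)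
  have coord_bound: "\<bar>\<psi> x $ i - \<psi> y $ i\<bar> \<le> (L + 1) * mdist X x y + s"
    if xy: "x \<in> mspace X" "y \<in> mspace X" for x y i
    using raise_component_diff_le[of k "D x" "E x" i "D y" "E y"] E_bound[OF xy, of i] D_lip[OF xy]
    unfolding \<psi>_def distrib_right by linarith
  show ?thesis
  proof
    show "continuous_map (mtopology_of X) euclidean \<psi>"
      unfolding \<psi>_def using D_cont E_cont by (rule continuous_map_raise_component)
    show "\<psi> a = \<phi> a" if "a \<in> A" for a
      using raise_component_0[OF \<phi>_half[OF that]] mdist_set_eq_0[OF A_sub A(2) that]
      by (simp add: \<psi>_def D_def E_on_A[OF that])
    show "0 \<le> \<psi> x $ k" for x
      using mdist_set_nonneg[OF A(2)] D_le[of x] unfolding D_def by (meson order_trans)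
    show "\<exists>a\<in>A. mdist X x a \<le> norm (\<psi> x) + 1" for x
    proof -
      obtain a where "a \<in> A" "mdist X x a < D x + 1"
        using mdist_set_approx[OF A(2) zero_less_one] unfolding D_def by blast
      moreover have "D x \<le> norm (\<psi> x)"
        using D_le[of x] component_le_norm_cart[of "\<psi> x" k] by linarith
      ultimately show ?thesis by force
    qed
    show "0 \<le> real CARD('n) * (L + 1)" using L by simp
    show "0 \<le> real CARD('n) * s" using s by simp
    show "dist (\<psi> x) (\<psi> y) \<le> real CARD('n) * (L + 1) * mdist X x y + real CARD('n) * s"
      if "x \<in> mspace X" "y \<in> mspace X" for x y
      using dist_cart_le_card_mult[of "\<psi> x" "\<psi> y", OF coord_bound[OF that]]
      by (simp add: algebra_simps)
  qed
qed

section \<open>Coercive extensions\<close>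

lemma proper_mmap_submetric_iff:
  assumes S: "closedin (mtopology_of Y) S" and f: "f ` mspace X \<subseteq> S"
  shows "proper_mmap X (submetric Y S) f \<longleftrightarrow> proper_mmap X Y f"
proof
  assume proper: "proper_mmap X (submetric Y S) f"
  show "proper_mmap X Y f"
    unfolding proper_mmap_def
  proof (intro allI impI)
    fix K assume "compactin (mtopology_of Y) K"
    then have "compactin (mtopology_of (submetric Y S)) (S \<inter> K)"
      using S by (simp add: mtopology_of_submetric compactin_subtopology closed_Int_compactin)
    then have "compactin (mtopology_of X) {x \<in> mspace X. f x \<in> S \<inter> K}"
      using proper unfolding proper_mmap_def by blast
    moreover have "{x \<in> mspace X. f x \<in> S \<inter> K} = {x \<in> mspace X. f x \<in> K}"
      using f by auto
    ultimately show "compactin (mtopology_of X) {x \<in> mspace X. f x \<in> K}" by simp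
  qed
next
  assume "proper_mmap X Y f"
  then show "proper_mmap X (submetric Y S) f"
    by (simp add: proper_mmap_def mtopology_of_submetric compactin_subtopology)
qed

lemma proper_mmap_euclidean_if_bounded_preimages:
  fixes f :: "'a \<Rightarrow> 'b::{real_normed_vector,heine_borel}"
  assumes X: "proper_metric X" and f_cont: "continuous_map (mtopology_of X) euclidean f"
    and bounded: "\<And>R. \<exists>c B. {x \<in> mspace X. norm (f x) \<le> R} \<subseteq> mcball_of X c B"
  shows "proper_mmap X euclidean_metric f"
  unfolding proper_mmap_def
proof (intro allI impI)
  fix K :: "'b set" assume "compactin (mtopology_of euclidean_metric) K"
  then have K: "compact K" by simp
  then obtain R where R: "\<And>v. v \<in> K \<Longrightarrow> norm v \<le> R"
    using compact_imp_bounded bounded_iff by metis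
  define P where "P = {x \<in> mspace X. f x \<in> K}"
  have P_closed: "closedin (mtopology_of X) P"
    using closedin_continuous_map_preimage[OF f_cont] compact_imp_closed[OF K] by (simp add: P_def)
  obtain c B where cB: "{x \<in> mspace X. norm (f x) \<le> R} \<subseteq> mcball_of X c B"
    using bounded by blast
  have P_sub: "P \<subseteq> mcball_of X c B"
    using cB R by (auto simp: P_def)
  show "compactin (mtopology_of X) P"
  proof (cases "P = {}")
    case False
    then have "c \<in> mspace X" using P_sub by auto
    then have "compactin (mtopology_of X) (mcball_of X c B)"
      using X by (simp add: proper_metric_def)
    then show ?thesis using closed_compactin P_sub P_closed by blast
  qed simp
qed

lemma bounded_preimages_if_coercive:
  fixes \<psi> :: "'a \<Rightarrow> 'b::{real_normed_vector,heine_borel}"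
  assumes A_sub: "A \<subseteq> mspace X"
    and proper_on_A: "proper_mmap (submetric X A) euclidean_metric \<psi>"
    and \<Lambda>: "0 \<le> \<Lambda>"
    and \<psi>_bound: "\<And>x y. x \<in> mspace X \<Longrightarrow> y \<in> mspace X \<Longrightarrow> dist (\<psi> x) (\<psi> y) \<le> \<Lambda> * mdist X x y + \<sigma>"
    and coercive: "\<And>x. x \<in> mspace X \<Longrightarrow> \<exists>a\<in>A. mdist X x a \<le> norm (\<psi> x) + 1"
  shows "\<exists>c B. {x \<in> mspace X. norm (\<psi> x) \<le> R} \<subseteq> mcball_of X c B"
proof -
  interpret Metric_space "mspace X" "mdist X" by simp
  define R' where "R' = R + \<Lambda> * (R + 1) + \<sigma>"
  have "compactin (mtopology_of euclidean_metric) (cball (0::'b) R')" by simp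
  then have "compactin (mtopology_of (submetric X A)) {a \<in> mspace (submetric X A). \<psi> a \<in> cball 0 R'}"
    using proper_on_A unfolding proper_mmap_def by blast
  moreover have "{a \<in> mspace (submetric X A). \<psi> a \<in> cball 0 R'} = {a \<in> A. norm (\<psi> a) \<le> R'}"
    using A_sub by auto
  ultimately have "compactin mtopology {a \<in> A. norm (\<psi> a) \<le> R'}"
    by (metis compactin_subtopology mtopology_of_submetric mtopology_of_def)
  then obtain c B where cB: "{a \<in> A. norm (\<psi> a) \<le> R'} \<subseteq> mcball c B"
    using compactin_imp_mbounded mbounded_def by blast
  have "x \<in> mcball c (B + R + 1)" if x: "x \<in> mspace X" "norm (\<psi> x) \<le> R" for x
  proof -
    obtain a where a: "a \<in> A" "mdist X x a \<le> norm (\<psi> x) + 1"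
      using coercive[OF x(1)] by blast
    have a_in: "a \<in> mspace X" using a(1) A_sub by blast
    have "norm (\<psi> a) \<le> norm (\<psi> x) + dist (\<psi> a) (\<psi> x)"
      by (metis dist_0_norm dist_commute dist_triangle)
    also have "\<dots> \<le> R + (\<Lambda> * mdist X a x + \<sigma>)"
      using x(2) \<psi>_bound[OF a_in x(1)] by linarith
    also have "\<dots> \<le> R'"
      using mult_left_mono[of "mdist X a x" "R + 1" \<Lambda>] \<Lambda> a(2) x(2)
      by (simp add: R'_def mdist_commute)
    finally have "a \<in> mcball c B" using cB a(1) by blast
    then have "c \<in> mspace X" "mdist X c a \<le> B" by auto
    moreover have "mdist X c x \<le> mdist X c a + mdist X a x"
      using \<open>c \<in> mspace X\<close> a_in x(1) by (rule triangle)
    ultimately show ?thesis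
      using x a(2) by (auto simp: mdist_commute)
  qed
  then have "{x \<in> mspace X. norm (\<psi> x) \<le> R} \<subseteq> mcball c (B + R + 1)" by blast
  then show ?thesis
    unfolding mcball_of_def by blast
qed

lemma nonzero_norm_bound_if_coercive:
  fixes \<psi> :: "'a \<Rightarrow> 'b::real_normed_vector"
  assumes A_sub: "A \<subseteq> mspace X" and a0: "a0 \<in> A" and x0: "x0 \<in> mspace X"
    and c: "0 < c" and on_A: "\<And>a. a \<in> A \<Longrightarrow> c * mdist X a a0 - b \<le> dist (\<psi> a) y0"
    and \<Lambda>: "0 \<le> \<Lambda>"
    and \<psi>_bound: "\<And>x y. x \<in> mspace X \<Longrightarrow> y \<in> mspace X \<Longrightarrow> dist (\<psi> x) (\<psi> y) \<le> \<Lambda> * mdist X x y + \<sigma>"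
    and coercive: "\<And>x. x \<in> mspace X \<Longrightarrow> \<exists>a\<in>A. mdist X x a \<le> norm (\<psi> x) + 1"
  obtains c' b' where "0 < c'" "0 \<le> b'"
    "\<And>x. x \<in> mspace X \<Longrightarrow> c' * mdist X x x0 - b' \<le> dist (\<psi> x) y0"
proof -
  define \<alpha> where "\<alpha> = c + \<Lambda> + 1"
  define \<beta> where "\<beta> = (c + \<Lambda>) * (norm y0 + 1) + b + \<sigma> + c * mdist X a0 x0"
  have \<alpha>: "0 < \<alpha>" using c \<Lambda> by (simp add: \<alpha>_def)
  have key: "c * mdist X x x0 \<le> \<alpha> * dist (\<psi> x) y0 + \<beta>" if x: "x \<in> mspace X" for x
  proof -
    define M where "M = dist (\<psi> x) y0"
    obtain a where a: "a \<in> A" "mdist X x a \<le> norm (\<psi> x) + 1"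
      using coercive[OF x] by blast
    have a_in: "a \<in> mspace X" using a(1) A_sub by blast
    have a0_in: "a0 \<in> mspace X" using a0 A_sub by blast
    have "norm (\<psi> x) \<le> norm y0 + M"
      using norm_triangle_sub[of "\<psi> x" y0] by (simp add: M_def dist_norm)
    then have near: "mdist X x a \<le> M + norm y0 + 1" using a(2) by linarith
    have "c * mdist X a a0 - b \<le> dist (\<psi> a) (\<psi> x) + M"
      using on_A[OF a(1)] dist_triangle[of "\<psi> a" y0 "\<psi> x"] by (simp add: M_def)
    then have far: "c * mdist X a a0 \<le> \<Lambda> * mdist X x a + \<sigma> + M + b"
      using \<psi>_bound[OF a_in x] by (simp add: mdist_commute)
    have "mdist X x x0 \<le> mdist X x a + mdist X a a0 + mdist X a0 x0"
      using mdist_triangle[OF x a_in x0] mdist_triangle[OF a_in a0_in x0] by linarith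
    then have "c * mdist X x x0 \<le> c * mdist X x a + c * mdist X a a0 + c * mdist X a0 x0"
      using mult_left_mono[of _ _ c] c by (fastforce simp: algebra_simps)
    also have "\<dots> \<le> (c + \<Lambda>) * mdist X x a + \<sigma> + M + b + c * mdist X a0 x0"
      using far by (simp add: algebra_simps)
    also have "\<dots> \<le> (c + \<Lambda>) * (M + norm y0 + 1) + \<sigma> + M + b + c * mdist X a0 x0"
      using mult_left_mono[OF near, of "c + \<Lambda>"] c \<Lambda> by simp
    also have "\<dots> = \<alpha> * M + \<beta>"
      by (simp add: \<alpha>_def \<beta>_def algebra_simps)
    finally show ?thesis by (simp add: M_def)
  qed
  show ?thesis
  proof
    show "0 < c / \<alpha>" using c \<alpha> by simp
    show "0 \<le> max 0 \<beta> / \<alpha>" using \<alpha> by simp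
    show "c / \<alpha> * mdist X x x0 - max 0 \<beta> / \<alpha> \<le> dist (\<psi> x) y0" if "x \<in> mspace X" for x
      using key[OF that] \<alpha> by (simp add: field_simps)
  qed
qed

lemma nonzero_norm_if_coercive:
  fixes \<psi> :: "'a \<Rightarrow> 'b::real_normed_vector"
  assumes A_sub: "A \<subseteq> mspace X" and A_ne: "A \<noteq> {}"
    and nz: "nonzero_norm (submetric X A) (submetric euclidean_metric S) \<psi>"
    and \<Lambda>: "0 \<le> \<Lambda>"
    and \<psi>_bound: "\<And>x y. x \<in> mspace X \<Longrightarrow> y \<in> mspace X \<Longrightarrow> dist (\<psi> x) (\<psi> y) \<le> \<Lambda> * mdist X x y + \<sigma>"
    and coercive: "\<And>x. x \<in> mspace X \<Longrightarrow> \<exists>a\<in>A. mdist X x a \<le> norm (\<psi> x) + 1"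
  shows "nonzero_norm X (submetric euclidean_metric S) \<psi>"
  unfolding nonzero_norm_def
proof (intro ballI)
  fix x0 y0 assume x0: "x0 \<in> mspace X" and y0: "y0 \<in> mspace (submetric euclidean_metric S)"
  obtain a0 where a0: "a0 \<in> A" using A_ne by blast
  then have "a0 \<in> mspace (submetric X A)" using A_sub by auto
  then obtain c b where c: "0 < c" and "\<forall>a\<in>mspace (submetric X A).
      c * mdist (submetric X A) a a0 - b \<le> mdist (submetric euclidean_metric S) (\<psi> a) y0"
    using nz y0 unfolding nonzero_norm_def by blast
  then have on_A: "\<And>a. a \<in> A \<Longrightarrow> c * mdist X a a0 - b \<le> dist (\<psi> a) y0"
    using A_sub by auto
  obtain c' b' where "0 < c'" "0 \<le> b'" "\<And>x. x \<in> mspace X \<Longrightarrow> c' * mdist X x x0 - b' \<le> dist (\<psi> x) y0"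
    using nonzero_norm_bound_if_coercive[OF A_sub a0 x0 c on_A \<Lambda> \<psi>_bound coercive] by blast
  then show "\<exists>c b. 0 < c \<and> 0 \<le> b \<and>
      (\<forall>x\<in>mspace X. c * mdist X x x0 - b \<le> mdist (submetric euclidean_metric S) (\<psi> x) y0)"
    by auto
qed

section \<open>The absolute extensor property\<close>

lemma mdist_half_space_metric [simp]: "mdist (half_space_metric k) = dist"
  by (simp add: half_space_metric_def)

lemma mtopology_of_half_space_metric [simp]:
  "mtopology_of (half_space_metric k) = subtopology euclidean {x. 0 \<le> x $ k}"
  by (simp add: half_space_metric_def mtopology_of_submetric)

lemma proper_mmap_half_space_iff:
  assumes "\<And>x. x \<in> mspace X \<Longrightarrow> 0 \<le> f x $ k"
  shows "proper_mmap X (half_space_metric k) f \<longleftrightarrow> proper_mmap X euclidean_metric f"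
  unfolding half_space_metric_def
  using assms closed_halfspace_component_ge_cart[of 0 k]
  by (intro proper_mmap_submetric_iff) auto

lemma half_space_extension_nonempty:
  fixes \<phi> :: "'a \<Rightarrow> real^'n" and k :: 'n
  assumes X: "proper_metric X" and A: "closedin (mtopology_of X) A" "A \<noteq> {}"
    and \<phi>: "morphism_A (submetric X A) (half_space_metric k) \<phi>"
  obtains \<psi> where "morphism_A X (half_space_metric k) \<psi>" "\<forall>a\<in>A. \<psi> a = \<phi> a"
    "nonzero_norm (submetric X A) (half_space_metric k) \<phi> \<longrightarrow> nonzero_norm X (half_space_metric k) \<psi>"
proof -
  have A_sub: "A \<subseteq> mspace X" using closedin_subset[OF A(1)] by simp
  have A_space: "mspace (submetric X A) = A" using A_sub by auto
  have \<phi>_cont: "continuous_map (subtopology (mtopology_of X) A) euclidean \<phi>"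
    and \<phi>_half: "\<And>a. a \<in> A \<Longrightarrow> 0 \<le> \<phi> a $ k"
    using \<phi> A_sub by (auto simp: morphism_A_def mtopology_of_submetric continuous_map_in_subtopology)
  obtain L s where L: "0 \<le> L" "0 \<le> s"
    and \<phi>_bound: "\<And>a a'. a \<in> A \<Longrightarrow> a' \<in> A \<Longrightarrow> dist (\<phi> a) (\<phi> a') \<le> L * mdist X a a' + s"
    using \<phi> A_space by (auto simp: morphism_A_def asymp_lipschitz_def)
  have \<phi>_proper: "proper_mmap (submetric X A) euclidean_metric \<phi>"
    using \<phi> proper_mmap_half_space_iff[of "submetric X A" \<phi> k] \<phi>_half A_space
    by (simp add: morphism_A_def)
  obtain \<psi> \<Lambda> \<sigma> where \<psi>_cont: "continuous_map (mtopology_of X) euclidean \<psi>"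
    and \<psi>_on_A: "\<And>a. a \<in> A \<Longrightarrow> \<psi> a = \<phi> a"
    and \<psi>_half: "\<And>x. x \<in> mspace X \<Longrightarrow> 0 \<le> \<psi> x $ k"
    and coercive: "\<And>x. x \<in> mspace X \<Longrightarrow> \<exists>a\<in>A. mdist X x a \<le> norm (\<psi> x) + 1"
    and \<Lambda>: "0 \<le> \<Lambda>" and \<sigma>: "0 \<le> \<sigma>"
    and \<psi>_bound: "\<And>x y. x \<in> mspace X \<Longrightarrow> y \<in> mspace X \<Longrightarrow> dist (\<psi> x) (\<psi> y) \<le> \<Lambda> * mdist X x y + \<sigma>"
    using half_space_lift[OF A \<phi>_cont \<phi>_half L \<phi>_bound] by blast
  have "{x \<in> mspace (submetric X A). \<psi> x \<in> K} = {x \<in> mspace (submetric X A). \<phi> x \<in> K}" for K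
    using \<psi>_on_A A_space by auto
  then have \<psi>_proper_on_A: "proper_mmap (submetric X A) euclidean_metric \<psi>"
    using \<phi>_proper by (simp add: proper_mmap_def)
  have \<psi>_proper: "proper_mmap X euclidean_metric \<psi>"
    using bounded_preimages_if_coercive[OF A_sub \<psi>_proper_on_A \<Lambda> \<psi>_bound coercive]
    by (rule proper_mmap_euclidean_if_bounded_preimages[OF X \<psi>_cont])
  have "asymp_lipschitz X (half_space_metric k) \<psi>"
    unfolding asymp_lipschitz_def using \<Lambda> \<sigma> \<psi>_bound by auto
  then have "morphism_A X (half_space_metric k) \<psi>"
    unfolding morphism_A_def
    using \<psi>_cont \<psi>_half \<psi>_proper proper_mmap_half_space_iff[of X \<psi> k]
    by (auto simp: continuous_map_in_subtopology)
  moreover have "nonzero_norm X (half_space_metric k) \<psi>"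
    if "nonzero_norm (submetric X A) (half_space_metric k) \<phi>"
  proof -
    have "nonzero_norm (submetric X A) (half_space_metric k) \<psi>"
      using that A_space \<psi>_on_A by (simp add: nonzero_norm_def)
    then show ?thesis
      unfolding half_space_metric_def
      using nonzero_norm_if_coercive[OF A_sub A(2) _ \<Lambda> \<psi>_bound coercive] by blast
  qed
  ultimately show ?thesis
    using that \<psi>_on_A by blast
qed

lemma morphism_At_zero_on_singleton:
  assumes x0: "x0 \<in> mspace X"
  shows "morphism_At (submetric X {x0}) (half_space_metric k) (\<lambda>_. 0)"
proof -
  have space: "mspace (submetric X {x0}) = {x0}" using x0 by auto
  have d0: "mdist X x0 x0 = 0" using x0 by simp
  have "proper_mmap (submetric X {x0}) (half_space_metric k) (\<lambda>_. 0)"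
    unfolding proper_mmap_def space
    by (intro allI impI finite_imp_compactin) (auto simp: space x0)
  moreover have "asymp_lipschitz (submetric X {x0}) (half_space_metric k) (\<lambda>_. 0)"
    unfolding asymp_lipschitz_def space by (intro exI[of _ 0]) simp
  moreover have "nonzero_norm (submetric X {x0}) (half_space_metric k) (\<lambda>_. 0)"
    unfolding nonzero_norm_def space by (intro ballI exI[of _ 1] exI[of _ 0]) (simp add: d0)
  ultimately show ?thesis
    unfolding morphism_At_def morphism_A_def by (auto simp: continuous_map_in_subtopology)
qed

lemma half_space_morphism_At_exists:
  assumes X: "proper_metric X"
  obtains \<psi> where "morphism_At X (half_space_metric k) \<psi>"
proof (cases "mspace X = {}")
  case True
  then have "morphism_At X (half_space_metric k) (\<lambda>_. 0)"
    by (simp add: morphism_At_def morphism_A_def continuous_map_def proper_mmap_def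
        asymp_lipschitz_def nonzero_norm_def) (use order_refl in blast)
  then show ?thesis ..
next
  case False
  then obtain x0 where x0: "x0 \<in> mspace X" by blast
  have "Hausdorff_space (mtopology_of X)"
    by (simp add: Metric_space.Hausdorff_space_mtopology mtopology_of_def)
  then have "closedin (mtopology_of X) {x0}"
    using x0 by (simp add: Hausdorff_imp_t1_space closedin_t1_singleton)
  then show ?thesis
    using half_space_extension_nonempty[OF X _ _, of "{x0}" k "\<lambda>_. 0"]
      morphism_At_zero_on_singleton[OF x0, of k] that
    by (auto simp: morphism_At_def)
qed

lemma half_space_extension:
  fixes \<phi> :: "'a \<Rightarrow> real^'n" and k :: 'n
  assumes X: "proper_metric X" and A: "closedin (mtopology_of X) A"
    and \<phi>: "morphism_A (submetric X A) (half_space_metric k) \<phi>"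
  obtains \<psi> where "morphism_A X (half_space_metric k) \<psi>" "\<forall>a\<in>A. \<psi> a = \<phi> a"
    "nonzero_norm (submetric X A) (half_space_metric k) \<phi> \<longrightarrow> nonzero_norm X (half_space_metric k) \<psi>"
proof (cases "A = {}")
  case True
  obtain \<psi> where "morphism_At X (half_space_metric k) \<psi>"
    using half_space_morphism_At_exists[OF X] .
  with True show ?thesis
    using that by (auto simp: morphism_At_def)
next
  case False
  with half_space_extension_nonempty[OF X A _ \<phi>] that show ?thesis by blast
qed

theorem theorem4p3:
  fixes X :: "'a metric" and k :: "'n::finite"
  assumes "proper_metric X"
  shows "extends_A X (half_space_metric k) \<and> extends_At X (half_space_metric k)"
proof
  show "extends_A X (half_space_metric k)"
    unfolding extends_A_def using half_space_extension[OF assms] by metis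
  show "extends_At X (half_space_metric k)"
    unfolding extends_At_def morphism_At_def using half_space_extension[OF assms] by metis
qed

end
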